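(* Let $L$ be a reduced Latin square of order $n$ with rows $\sigma_1,\dots,\sigma_n$ (as permutations), and let $\Theta=(\alpha,\beta,\gamma)\in\mathfrak A(L)$. Then for each $i=1,\dots,n$, the permutation $\sigma_{\alpha^{-1}(1)}^{-1}\sigma_{\alpha^{-1}(i)}$ has the same cycle structure as $\sigma_i$.
   Context: A Latin square of order $n$ is an $n\times n$ array with entries in $[n]$, each symbol once in each row and column. Permutations compose right to left. An isotopism $(\alpha,\beta,\gamma)\in S_n^3$ acts by $(\alpha,\beta,\gamma)(L)=L'$ with $L'(\alpha(r),\beta(c))=\gamma(L(r,c))$; $\mathfrak A(L)=\{\Theta\in S_n^3:\Theta(L)=L\}$ is the autotopy group. Rows and columns are viewed as permutations: if symbol $i$ appears in the $j$th place of a row (column) $\sigma$, then $\sigma(i)=j$; so row $r$ is $\sigma_r$ with $\sigma_r(L(r,c))=c$. $L$ is reduced if its first row and first column are the identity permutation. The cycle structure of a permutation is the multiset of lengths of the cycles in its disjoint cycle decomposition. *)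

theory Defs
  imports "HOL-Combinatorics.Combinatorics" "HOL-Library.Multiset"
begin

text \<open>Latin squares of order n are modelled as functions L :: nat => nat => nat,
  with rows, columns and symbols indexed by {1..n}; values outside are irrelevant.\<close>

definition latin_square :: "nat \<Rightarrow> (nat \<Rightarrow> nat \<Rightarrow> nat) \<Rightarrow> bool" where
  "latin_square n L \<longleftrightarrow>
     (\<forall>r\<in>{1..n}. bij_betw (\<lambda>c. L r c) {1..n} {1..n}) \<and>
     (\<forall>c\<in>{1..n}. bij_betw (\<lambda>r. L r c) {1..n} {1..n})"

definition row_perm :: "nat \<Rightarrow> (nat \<Rightarrow> nat \<Rightarrow> nat) \<Rightarrow> nat \<Rightarrow> nat \<Rightarrow> nat" where
  "row_perm n L r = (\<lambda>i. if i \<in> {1..n} then (THE c. c \<in> {1..n} \<and> L r c = i) else i)"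

definition col_perm :: "nat \<Rightarrow> (nat \<Rightarrow> nat \<Rightarrow> nat) \<Rightarrow> nat \<Rightarrow> nat \<Rightarrow> nat" where
  "col_perm n L c = (\<lambda>i. if i \<in> {1..n} then (THE r. r \<in> {1..n} \<and> L r c = i) else i)"

definition reduced :: "nat \<Rightarrow> (nat \<Rightarrow> nat \<Rightarrow> nat) \<Rightarrow> bool" where
  "reduced n L \<longleftrightarrow> latin_square n L \<and>
     (\<forall>i\<in>{1..n}. row_perm n L 1 i = i) \<and> (\<forall>i\<in>{1..n}. col_perm n L 1 i = i)"

definition autotopy :: "nat \<Rightarrow> (nat \<Rightarrow> nat \<Rightarrow> nat) \<Rightarrow> (nat \<Rightarrow> nat) \<Rightarrow> (nat \<Rightarrow> nat) \<Rightarrow> (nat \<Rightarrow> nat) \<Rightarrow> bool" where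
  "autotopy n L \<alpha> \<beta> \<gamma> \<longleftrightarrow> \<alpha> permutes {1..n} \<and> \<beta> permutes {1..n} \<and> \<gamma> permutes {1..n} \<and>
     (\<forall>r\<in>{1..n}. \<forall>c\<in>{1..n}. L (\<alpha> r) (\<beta> c) = \<gamma> (L r c))"

text \<open>Cycle structure of a permutation of S: multiset of the lengths of its cycles (orbits),
  each cycle counted once (fixed points are cycles of length 1).\<close>
definition cycle_structure :: "'a set \<Rightarrow> ('a \<Rightarrow> 'a) \<Rightarrow> nat multiset" where
  "cycle_structure S p = image_mset card (mset_set ((\<lambda>x. orbit p x) ` S))"

end

theory Submission
  imports Defs
begin

text \<open>An autotopy turns row \<open>r\<close> into row \<open>\<alpha> r\<close> via \<open>\<sigma>\<^bsub>\<alpha> r\<^esub> \<circ> \<gamma> = \<beta> \<circ> \<sigma>\<^bsub>r\<^esub>\<close>.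
  For \<open>r = \<alpha>\<inverse>(1)\<close> the first row of a reduced square is the identity, so \<open>\<gamma> = \<beta> \<circ> \<sigma>\<^bsub>\<alpha>\<inverse>(1)\<^esub>\<close>;
  eliminating \<open>\<beta>\<close> shows that \<open>\<sigma>\<^bsub>\<alpha>\<inverse>(1)\<^esub>\<inverse> \<circ> \<sigma>\<^bsub>\<alpha>\<inverse>(i)\<^esub>\<close> is the conjugate \<open>\<gamma>\<inverse> \<circ> \<sigma>\<^bsub>i\<^esub> \<circ> \<gamma>\<close>,
  and conjugate permutations have the same cycle structure.\<close>

lemma funpow_semiconj:
  assumes "h \<circ> f = g \<circ> h"
  shows "h \<circ> f ^^ k = g ^^ k \<circ> h"
proof (induction k)
  case (Suc k)
  have "h \<circ> f ^^ Suc k = (h \<circ> f ^^ k) \<circ> f" by (simp only: funpow_Suc_right o_assoc)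
  also have "\<dots> = g ^^ k \<circ> (h \<circ> f)" by (simp only: Suc.IH o_assoc)
  also have "\<dots> = g ^^ Suc k \<circ> h" by (simp only: assms funpow_Suc_right o_assoc)
  finally show ?case .
qed simp

lemma orbit_semiconj:
  assumes "h \<circ> f = g \<circ> h"
  shows "orbit g (h x) = h ` orbit f x"
proof -
  have "(g ^^ k) (h x) = h ((f ^^ k) x)" for k
    using fun_cong[OF funpow_semiconj[OF assms, of k], of x] by simp
  then show ?thesis unfolding orbit_altdef by auto
qed

lemma cycle_structure_conj:
  assumes "h permutes S" and "h \<circ> f = g \<circ> h"
  shows "cycle_structure S f = cycle_structure S g"
proof -
  have "inj h" using assms(1) by (rule permutes_inj)
  define Os where "Os = (\<lambda>x. orbit f x) ` S"
  have "(\<lambda>x. orbit g x) ` S = (\<lambda>x. orbit g x) ` h ` S"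
    unfolding permutes_image[OF assms(1)] ..
  also have "\<dots> = (\<lambda>x. orbit g (h x)) ` S" by (simp only: image_image)
  also have "\<dots> = image h ` Os"
    unfolding Os_def orbit_semiconj[OF assms(2)] by (simp add: image_image)
  finally have orbits_g: "(\<lambda>x. orbit g x) ` S = image h ` Os" .
  have "inj_on (image h) Os"
    using \<open>inj h\<close> by (simp add: inj_on_def inj_image_eq_iff)
  then have "cycle_structure S g = image_mset card (image_mset (image h) (mset_set Os))"
    unfolding cycle_structure_def orbits_g by (simp add: image_mset_mset_set)
  also have "\<dots> = image_mset card (mset_set Os)"
    using card_image[OF inj_on_subset[OF \<open>inj h\<close> subset_UNIV]] by (simp add: multiset.map_comp o_def)
  finally show ?thesis unfolding cycle_structure_def Os_def by (rule sym)
qed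

lemma latin_square_row_bij:
  assumes "latin_square n L" and "r \<in> {1..n}"
  shows "bij_betw (L r) {1..n} {1..n}"
  using assms unfolding latin_square_def by simp

lemma row_perm_eq_inv_into:
  assumes "latin_square n L" and "r \<in> {1..n}" and "x \<in> {1..n}"
  shows "row_perm n L r x = inv_into {1..n} (L r) x"
proof -
  note bij = latin_square_row_bij[OF assms(1,2)]
  have x: "x \<in> L r ` {1..n}" using bij assms(3) by (simp add: bij_betw_imp_surj_on)
  have "(THE c. c \<in> {1..n} \<and> L r c = x) = inv_into {1..n} (L r) x"
  proof (rule the_equality)
    show "inv_into {1..n} (L r) x \<in> {1..n} \<and> L r (inv_into {1..n} (L r) x) = x"
      using inv_into_into[OF x] f_inv_into_f[OF x] by simp
    show "c = inv_into {1..n} (L r) x" if "c \<in> {1..n} \<and> L r c = x" for c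
      using that inv_into_f_f[OF bij_betw_imp_inj_on[OF bij], of c] by simp
  qed
  then show ?thesis unfolding row_perm_def using assms(3) by simp
qed

lemma row_perm_outside: "x \<notin> {1..n} \<Longrightarrow> row_perm n L r x = x"
  unfolding row_perm_def by (simp del: atLeastAtMost_iff)

lemma row_perm_permutes:
  assumes "latin_square n L" and "r \<in> {1..n}"
  shows "row_perm n L r permutes {1..n}"
proof (rule bij_imp_permutes)
  have "bij_betw (row_perm n L r) {1..n} {1..n} = bij_betw (inv_into {1..n} (L r)) {1..n} {1..n}"
    by (rule bij_betw_cong) (rule row_perm_eq_inv_into[OF assms])
  then show "bij_betw (row_perm n L r) {1..n} {1..n}"
    using bij_betw_inv_into[OF latin_square_row_bij[OF assms]] by simp
qed (rule row_perm_outside)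

lemma row_perm_L:
  assumes "latin_square n L" and "r \<in> {1..n}" and "c \<in> {1..n}"
  shows "row_perm n L r (L r c) = c"
proof -
  note bij = latin_square_row_bij[OF assms(1,2)]
  have "L r c \<in> {1..n}" using bij_betw_apply[OF bij assms(3)] .
  then show ?thesis
    using row_perm_eq_inv_into[OF assms(1,2)] inv_into_f_f[OF bij_betw_imp_inj_on[OF bij] assms(3)]
    by simp
qed

lemma L_row_perm:
  assumes "latin_square n L" and "r \<in> {1..n}" and "x \<in> {1..n}"
  shows "L r (row_perm n L r x) = x"
  using row_perm_eq_inv_into[OF assms] bij_betw_inv_into_right[OF latin_square_row_bij[OF assms(1,2)] assms(3)]
  by simp

lemma autotopy_row_perm:
  assumes "latin_square n L" and "autotopy n L \<alpha> \<beta> \<gamma>" and "r \<in> {1..n}"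
  shows "row_perm n L (\<alpha> r) \<circ> \<gamma> = \<beta> \<circ> row_perm n L r"
proof
  fix x
  have perms: "\<alpha> permutes {1..n}" "\<beta> permutes {1..n}" "\<gamma> permutes {1..n}"
    using assms(2) unfolding autotopy_def by auto
  show "(row_perm n L (\<alpha> r) \<circ> \<gamma>) x = (\<beta> \<circ> row_perm n L r) x"
  proof (cases "x \<in> {1..n}")
    case True
    define c where "c = row_perm n L r x"
    have c: "c \<in> {1..n}"
      unfolding c_def using row_perm_permutes[OF assms(1,3)] True by (rule permutes_in_image[THEN iffD2])
    have "L (\<alpha> r) (\<beta> c) = \<gamma> (L r c)"
      using assms(2,3) c unfolding autotopy_def by blast
    then have "\<gamma> x = L (\<alpha> r) (\<beta> c)"
      unfolding c_def L_row_perm[OF assms(1,3) True] by simp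
    moreover have "\<alpha> r \<in> {1..n}" "\<beta> c \<in> {1..n}"
      using permutes_in_image[OF perms(1)] permutes_in_image[OF perms(2)] assms(3) c by blast+
    ultimately show ?thesis using row_perm_L[OF assms(1)] by (simp add: c_def)
  next
    case False
    then show ?thesis
      using permutes_not_in[OF perms(2) False] permutes_not_in[OF perms(3) False]
      by (simp add: row_perm_outside)
  qed
qed

lemma reduced_first_row_perm:
  assumes "reduced n L"
  shows "row_perm n L 1 = id"
proof
  show "row_perm n L 1 x = id x" for x
    using assms row_perm_outside[of x n L 1] unfolding reduced_def by (cases "x \<in> {1..n}") auto
qed

theorem lemma5p1:
  fixes n :: nat and L :: "nat \<Rightarrow> nat \<Rightarrow> nat" and \<alpha> \<beta> \<gamma> :: "nat \<Rightarrow> nat"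
  assumes "reduced n L"
    and "autotopy n L \<alpha> \<beta> \<gamma>"
    and "i \<in> {1..n}"
  shows "cycle_structure {1..n}
           (inv (row_perm n L (inv \<alpha> 1)) \<circ> row_perm n L (inv \<alpha> i))
         = cycle_structure {1..n} (row_perm n L i)"
proof -
  have latin: "latin_square n L" using assms(1) unfolding reduced_def by simp
  have \<alpha>: "\<alpha> permutes {1..n}" and \<gamma>: "\<gamma> permutes {1..n}"
    using assms(2) unfolding autotopy_def by auto
  have row_inv_\<alpha>: "inv \<alpha> j \<in> {1..n}" "\<alpha> (inv \<alpha> j) = j" if "j \<in> {1..n}" for j
    using that permutes_in_image[OF permutes_inv[OF \<alpha>]] permutes_inverses(1)[OF \<alpha>] by auto
  let ?\<sigma>\<^sub>1 = "row_perm n L (inv \<alpha> 1)" and ?\<sigma>\<^sub>i = "row_perm n L (inv \<alpha> i)"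
  have one: "1 \<in> {1..n}" using assms(3) by simp
  have "\<gamma> = \<beta> \<circ> ?\<sigma>\<^sub>1"
    using autotopy_row_perm[OF latin assms(2) row_inv_\<alpha>(1)[OF one]]
    unfolding row_inv_\<alpha>(2)[OF one] reduced_first_row_perm[OF assms(1)] by simp
  then have "\<gamma> \<circ> inv ?\<sigma>\<^sub>1 = \<beta>"
    using row_perm_permutes[OF latin row_inv_\<alpha>(1)[OF one]]
    by (simp add: comp_assoc permutes_inv_o(1))
  then have "\<gamma> \<circ> (inv ?\<sigma>\<^sub>1 \<circ> ?\<sigma>\<^sub>i) = row_perm n L i \<circ> \<gamma>"
    using autotopy_row_perm[OF latin assms(2) row_inv_\<alpha>(1)[OF assms(3)]] row_inv_\<alpha>(2)[OF assms(3)]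
    by (simp add: o_assoc)
  then show ?thesis by (rule cycle_structure_conj[OF \<gamma>])
qed

end
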